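(* Let $X$ be a finite alphabet with at least two letters and $k\ge2$. For every $F\in\mathcal F_{\mathcal T_k}$, the class $\mathcal R\mathbf\Sigma(F)$ is closed under $\le_{DA}$ and the class $\mathcal A\mathbf\Sigma(F)$ is closed under $\le_{AA}$; that is, if $B\le_{DA}A\in\mathcal R\mathbf\Sigma(F)$ then $B\in\mathcal R\mathbf\Sigma(F)$, and if $B\le_{AA}A\in\mathcal A\mathbf\Sigma(F)$ then $B\in\mathcal A\mathbf\Sigma(F)$.
   Context: $\bar k=\{0,\dots,k-1\}$; $\mathcal R$ ($\mathcal A$) is the class of regular (aperiodic) $\omega$-languages over $X$ (recognised by deterministic Muller acceptors, resp. with aperiodic automaton). Forests are finite $F\subseteq\omega^+$ closed under nonempty prefixes (prefix order), trees finite prefix-closed $V\subseteq\omega^*$; $\mathcal T_k$ = $\bar k$-labeled trees; $\mathcal F_{\mathcal T_k}$ = forests $(F,c)$ labeled by elements of $\mathcal T_k$. For a 2-base $\mathcal L=(\mathcal L_0,\mathcal L_1)$ in $S$ and $(F,c)\in\mathcal F_{\mathcal T_k}$, an $F$-family is $\{U_\tau\}_{\tau\in F}\subseteq\mathcal L_0$ with $U_{\tau i}\subseteq U_\tau$, $\bigcup U_\tau=S$, together with, for each $\tau$ with $c(\tau)=(V,v)$, sets $U_{\tau\sigma}=\tilde U_\tau\cap B_{\tau\sigma}$, $B_{\tau\sigma}\in\mathcal L_1$, $\sigma\in V$, with $U_{\tau\sigma i}\subseteq U_{\tau\sigma}$ and $\bigcup_\sigma U_{\tau\sigma}=\tilde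 U_\tau$, where $\tilde U_\tau=U_\tau\setminus\bigcup_{\tau i\in F}U_{\tau i}$; it determines $A:S\to\bar k$ if $A(x)=v(\sigma)$ whenever $x\in U_{\tau\sigma}\setminus\bigcup_{\sigma i\in V}U_{\tau\sigma i}$. $\mathcal L(F)$ is the set of $k$-partitions determined by some $F$-family. $\mathcal R\mathbf\Sigma=(\mathcal R\cap\mathbf\Sigma^0_1,\mathcal R\cap\mathbf\Sigma^0_2)$ and $\mathcal A\mathbf\Sigma=(\mathcal A\cap\mathbf\Sigma^0_1,\mathcal A\cap\mathbf\Sigma^0_2)$, where $\mathbf\Sigma^0_1$ are the open sets and $\mathbf\Sigma^0_2$ the countable unions of closed sets of $X^\omega$. DA-functions (AA-functions) are functions $X^\omega\to X^\omega$ computed by asynchronous transducers (automaton plus output $g:Q\times X\to X^*$; with aperiodic automaton for AA); $B\le_{DA}A$ ($B\le_{AA}A$) iff $B=A\circ h$ for some such $h$. *)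

theory Defs
  imports Main
begin

definition wf_aut :: "nat set \<Rightarrow> nat \<Rightarrow> (nat \<Rightarrow> 'x \<Rightarrow> nat) \<Rightarrow> bool" where
  "wf_aut Q q0 d \<longleftrightarrow> finite Q \<and> q0 \<in> Q \<and> (\<forall>q\<in>Q. \<forall>a. d q a \<in> Q)"

definition dstar :: "(nat \<Rightarrow> 'x \<Rightarrow> nat) \<Rightarrow> nat \<Rightarrow> 'x list \<Rightarrow> nat" where
  "dstar d q u = foldl d q u"

text \<open>Aperiodic automaton: its transition monoid is aperiodic.\<close>
definition aperiodic_aut :: "nat set \<Rightarrow> (nat \<Rightarrow> 'x \<Rightarrow> nat) \<Rightarrow> bool" where
  "aperiodic_aut Q d \<longleftrightarrow> (\<exists>m. \<forall>u :: 'x list. \<forall>q\<in>Q.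
      dstar d q (concat (replicate m u)) = dstar d q (concat (replicate (Suc m) u)))"

primrec run :: "(nat \<Rightarrow> 'x \<Rightarrow> nat) \<Rightarrow> nat \<Rightarrow> (nat \<Rightarrow> 'x) \<Rightarrow> nat \<Rightarrow> nat" where
  "run d q0 w 0 = q0"
| "run d q0 w (Suc n) = d (run d q0 w n) (w n)"

definition muller_lang :: "nat \<Rightarrow> (nat \<Rightarrow> 'x \<Rightarrow> nat) \<Rightarrow> nat set set \<Rightarrow> (nat \<Rightarrow> 'x) set" where
  "muller_lang q0 d T = {w. {q. \<exists>\<^sub>\<infinity>n. run d q0 w n = q} \<in> T}"

definition regular_omega :: "(nat \<Rightarrow> 'x) set \<Rightarrow> bool" where
  "regular_omega L \<longleftrightarrow> (\<exists>Q q0 d T. wf_aut Q q0 d \<and> L = muller_lang q0 d T)"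

definition aperiodic_omega :: "(nat \<Rightarrow> 'x) set \<Rightarrow> bool" where
  "aperiodic_omega L \<longleftrightarrow>
     (\<exists>Q q0 d T. wf_aut Q q0 d \<and> aperiodic_aut Q d \<and> L = muller_lang q0 d T)"

definition open_omega :: "(nat \<Rightarrow> 'x) set \<Rightarrow> bool" where
  "open_omega A \<longleftrightarrow> (\<forall>w\<in>A. \<exists>n. \<forall>v. (\<forall>i<n. v i = w i) \<longrightarrow> v \<in> A)"

definition closed_omega :: "(nat \<Rightarrow> 'x) set \<Rightarrow> bool" where
  "closed_omega A \<longleftrightarrow> open_omega (- A)"

definition sigma02 :: "(nat \<Rightarrow> 'x) set \<Rightarrow> bool" where
  "sigma02 A \<longleftrightarrow> (\<exists>C :: nat \<Rightarrow> (nat \<Rightarrow> 'x) set. (\<forall>i. closed_omega (C i)) \<and> A = (\<Union>i. C i))"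

definition forest :: "nat list set \<Rightarrow> bool" where
  "forest F \<longleftrightarrow> finite F \<and> [] \<notin> F \<and>
     (\<forall>\<tau>\<in>F. \<forall>\<rho> \<rho>'. \<tau> = \<rho> @ \<rho>' \<and> \<rho> \<noteq> [] \<longrightarrow> \<rho> \<in> F)"

definition tree :: "nat list set \<Rightarrow> bool" where
  "tree V \<longleftrightarrow> finite V \<and> [] \<in> V \<and> (\<forall>\<sigma>\<in>V. \<forall>\<rho> \<rho>'. \<sigma> = \<rho> @ \<rho>' \<longrightarrow> \<rho> \<in> V)"

definition labeled_tree :: "nat \<Rightarrow> nat list set \<times> (nat list \<Rightarrow> nat) \<Rightarrow> bool" where
  "labeled_tree k T \<longleftrightarrow> tree (fst T) \<and> (\<forall>\<sigma>\<in>fst T. snd T \<sigma> < k)"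

definition forest_Tk :: "nat \<Rightarrow> nat list set \<Rightarrow> (nat list \<Rightarrow> nat list set \<times> (nat list \<Rightarrow> nat)) \<Rightarrow> bool" where
  "forest_Tk k F c \<longleftrightarrow> forest F \<and> (\<forall>\<tau>\<in>F. labeled_tree k (c \<tau>))"

text \<open>The class L(F) for a 2-base (L0,L1) in the space S = UNIV: the k-partitions
  A : S -> {0..<k} determined by some F-family.  U is the family U_tau, B gives the
  sets B_{tau sigma} in L1, and U_{tau sigma} = Utilde_tau \<inter> B_{tau sigma}.\<close>
definition Lclass ::
  "'a set set \<Rightarrow> 'a set set \<Rightarrow> nat \<Rightarrow> nat list set \<Rightarrow> (nat list \<Rightarrow> nat list set \<times> (nat list \<Rightarrow> nat))
    \<Rightarrow> ('a \<Rightarrow> nat) set" where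
  "Lclass L0 L1 k F c = {A. (\<forall>x. A x < k) \<and>
     (\<exists>(U :: nat list \<Rightarrow> 'a set) (B :: nat list \<Rightarrow> nat list \<Rightarrow> 'a set).
        let Ut = (\<lambda>\<tau>. U \<tau> - (\<Union>i\<in>{i. \<tau> @ [i] \<in> F}. U (\<tau> @ [i])));
            W = (\<lambda>\<tau> \<sigma>. Ut \<tau> \<inter> B \<tau> \<sigma>) in
        (\<forall>\<tau>\<in>F. U \<tau> \<in> L0)
      \<and> (\<forall>\<tau> i. \<tau> @ [i] \<in> F \<longrightarrow> \<tau> \<in> F \<longrightarrow> U (\<tau> @ [i]) \<subseteq> U \<tau>)
      \<and> (\<Union>\<tau>\<in>F. U \<tau>) = UNIV
      \<and> (\<forall>\<tau>\<in>F. (\<forall>\<sigma>\<in>fst (c \<tau>). B \<tau> \<sigma> \<in> L1)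
          \<and> (\<forall>\<sigma> i. \<sigma> @ [i] \<in> fst (c \<tau>) \<longrightarrow> W \<tau> (\<sigma> @ [i]) \<subseteq> W \<tau> \<sigma>)
          \<and> (\<Union>\<sigma>\<in>fst (c \<tau>). W \<tau> \<sigma>) = Ut \<tau>
          \<and> (\<forall>\<sigma>\<in>fst (c \<tau>). \<forall>x.
               x \<in> W \<tau> \<sigma> - (\<Union>i\<in>{i. \<sigma> @ [i] \<in> fst (c \<tau>)}. W \<tau> (\<sigma> @ [i]))
               \<longrightarrow> A x = snd (c \<tau>) \<sigma>)))}"

definition RSigma_F :: "nat \<Rightarrow> nat list set \<Rightarrow> (nat list \<Rightarrow> nat list set \<times> (nat list \<Rightarrow> nat))
    \<Rightarrow> ((nat \<Rightarrow> 'x) \<Rightarrow> nat) set" where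
  "RSigma_F k F c = Lclass {L. regular_omega L \<and> open_omega L} {L. regular_omega L \<and> sigma02 L} k F c"

definition ASigma_F :: "nat \<Rightarrow> nat list set \<Rightarrow> (nat list \<Rightarrow> nat list set \<times> (nat list \<Rightarrow> nat))
    \<Rightarrow> ((nat \<Rightarrow> 'x) \<Rightarrow> nat) set" where
  "ASigma_F k F c = Lclass {L. aperiodic_omega L \<and> open_omega L} {L. aperiodic_omega L \<and> sigma02 L} k F c"

definition trans_out :: "nat \<Rightarrow> (nat \<Rightarrow> 'x \<Rightarrow> nat) \<Rightarrow> (nat \<Rightarrow> 'x \<Rightarrow> 'x list) \<Rightarrow> (nat \<Rightarrow> 'x) \<Rightarrow> nat \<Rightarrow> 'x list" where
  "trans_out q0 d g w n = concat (map (\<lambda>i. g (run d q0 w i) (w i)) [0..<n])"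

definition computes :: "nat \<Rightarrow> (nat \<Rightarrow> 'x \<Rightarrow> nat) \<Rightarrow> (nat \<Rightarrow> 'x \<Rightarrow> 'x list) \<Rightarrow> ((nat \<Rightarrow> 'x) \<Rightarrow> (nat \<Rightarrow> 'x)) \<Rightarrow> bool" where
  "computes q0 d g h \<longleftrightarrow> (\<forall>w.
      (\<forall>m. \<exists>n. m < length (trans_out q0 d g w n))
    \<and> (\<forall>n j. j < length (trans_out q0 d g w n) \<longrightarrow> h w j = trans_out q0 d g w n ! j))"

definition DA_function :: "((nat \<Rightarrow> 'x) \<Rightarrow> (nat \<Rightarrow> 'x)) \<Rightarrow> bool" where
  "DA_function h \<longleftrightarrow> (\<exists>Q q0 d g. wf_aut Q q0 d \<and> computes q0 d g h)"

definition AA_function :: "((nat \<Rightarrow> 'x) \<Rightarrow> (nat \<Rightarrow> 'x)) \<Rightarrow> bool" where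
  "AA_function h \<longleftrightarrow> (\<exists>Q q0 d g. wf_aut Q q0 d \<and> aperiodic_aut Q d \<and> computes q0 d g h)"

definition DA_reducible :: "((nat \<Rightarrow> 'x) \<Rightarrow> nat) \<Rightarrow> ((nat \<Rightarrow> 'x) \<Rightarrow> nat) \<Rightarrow> bool" where
  "DA_reducible B A \<longleftrightarrow> (\<exists>h. DA_function h \<and> B = A \<circ> h)"

definition AA_reducible :: "((nat \<Rightarrow> 'x) \<Rightarrow> nat) \<Rightarrow> ((nat \<Rightarrow> 'x) \<Rightarrow> nat) \<Rightarrow> bool" where
  "AA_reducible B A \<longleftrightarrow> (\<exists>h. AA_function h \<and> B = A \<circ> h)"

end

theory Submission
  imports Defs "HOL-Library.Infinite_Set" "HOL-Library.Nat_Bijection"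
begin

(* Transducer-computed functions are continuous, so preimages of open sets, closed sets and
   countable unions of closed sets keep their Borel class.  If a deterministic Muller acceptor
   recognises L, then h^-1 L is recognised by the cascade of the transducer with the acceptor:
   its state records the transducer state q, the acceptor state p reached on the output produced
   so far, and the set S of acceptor states passed while reading the last output block.  Since
   every output block is finite and the output is infinite, the acceptor's infinity set on h w is
   the union of the S-components of the cascade's infinity set on w.  If both automata are
   aperiodic, so is the cascade: once a word u loops on the transducer, each further round of u
   emits the same block v, and a power of v loops on the acceptor.  Finally the defining
   conditions of an F-family are Boolean combinations and unions, which commute with preimages,
   so L(F) is closed under every h that preserves both classes of its 2-base. *)

lemma dstar_simps [simp]:
  "dstar d q [] = q"
  "dstar d q (a # u) = dstar d (d q a) u"
  "dstar d q (u @ v) = dstar d (dstar d q u) v"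
  by (simp_all add: dstar_def)

lemma dstar_closed: "wf_aut Q q0 d \<Longrightarrow> q \<in> Q \<Longrightarrow> dstar d q u \<in> Q"
  by (induction u arbitrary: q) (auto simp: wf_aut_def)

lemma run_closed: "wf_aut Q q0 d \<Longrightarrow> run d q0 w n \<in> Q"
  by (induction n) (auto simp: wf_aut_def)

definition wpow :: "'x list \<Rightarrow> nat \<Rightarrow> 'x list" where
  "wpow u n = concat (replicate n u)"

lemma wpow_simps [simp]:
  "wpow u 0 = []"
  "wpow u (Suc n) = u @ wpow u n"
  "wpow u (m + n) = wpow u m @ wpow u n"
  by (simp_all add: wpow_def replicate_add)

lemma wpow_Suc': "wpow u (Suc n) = wpow u n @ u"
  by (induction n) simp_all

lemma aperiodic_aut_loop:
  assumes "aperiodic_aut Q d"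
  obtains m where "\<And>u q. q \<in> Q \<Longrightarrow> dstar d (dstar d q (wpow u m)) u = dstar d q (wpow u m)"
proof -
  from assms obtain m where "\<forall>u. \<forall>q\<in>Q. dstar d q (wpow u m) = dstar d q (wpow u (Suc m))"
    unfolding aperiodic_aut_def wpow_def by blast
  then show thesis
    using that by (metis wpow_Suc' dstar_simps(3))
qed

lemma dstar_wpow_loop: "dstar d q u = q \<Longrightarrow> dstar d q (wpow u j) = q"
  by (induction j) simp_all

primrec gstar :: "(nat \<Rightarrow> 'x \<Rightarrow> nat) \<Rightarrow> (nat \<Rightarrow> 'x \<Rightarrow> 'x list) \<Rightarrow> nat \<Rightarrow> 'x list \<Rightarrow> 'x list" where
  "gstar d g q [] = []"
| "gstar d g q (a # u) = g q a @ gstar d g (d q a) u"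

lemma gstar_append: "gstar d g q (u @ v) = gstar d g q u @ gstar d g (dstar d q u) v"
  by (induction u arbitrary: q) auto

lemma gstar_wpow_loop: "dstar d q u = q \<Longrightarrow> gstar d g q (wpow u j) = wpow (gstar d g q u) j"
  by (induction j) (simp_all add: gstar_append)

definition visited :: "(nat \<Rightarrow> 'x \<Rightarrow> nat) \<Rightarrow> nat \<Rightarrow> 'x list \<Rightarrow> nat set" where
  "visited e p v = (\<lambda>i. dstar e p (take i v)) ` {..<length v}"

lemma finite_visited [simp]: "finite (visited e p v)"
  by (simp add: visited_def)

(* Automaton states are natural numbers, so the triples (q, p, S), with S finite, are encoded. *)
definition cascade_state :: "nat \<Rightarrow> nat \<Rightarrow> nat set \<Rightarrow> nat" where
  "cascade_state q p S = prod_encode (q, prod_encode (p, set_encode S))"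

definition cascade_q :: "nat \<Rightarrow> nat" where
  "cascade_q x = fst (prod_decode x)"

definition cascade_p :: "nat \<Rightarrow> nat" where
  "cascade_p x = fst (prod_decode (snd (prod_decode x)))"

definition cascade_seen :: "nat \<Rightarrow> nat set" where
  "cascade_seen x = set_decode (snd (prod_decode (snd (prod_decode x))))"

lemma cascade_state_sel [simp]:
  "cascade_q (cascade_state q p S) = q"
  "cascade_p (cascade_state q p S) = p"
  "finite S \<Longrightarrow> cascade_seen (cascade_state q p S) = S"
  by (simp_all add: cascade_state_def cascade_q_def cascade_p_def cascade_seen_def)

definition cascade ::
  "(nat \<Rightarrow> 'x \<Rightarrow> nat) \<Rightarrow> (nat \<Rightarrow> 'x \<Rightarrow> 'x list) \<Rightarrow> (nat \<Rightarrow> 'x \<Rightarrow> nat) \<Rightarrow> nat \<Rightarrow> 'x \<Rightarrow> nat" where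
  "cascade d g e x a =
     (let q = cascade_q x; p = cascade_p x
      in cascade_state (d q a) (dstar e p (g q a)) (visited e p (g q a)))"

lemma cascade_sel [simp]:
  "cascade_q (cascade d g e x a) = d (cascade_q x) a"
  "cascade_p (cascade d g e x a) = dstar e (cascade_p x) (g (cascade_q x) a)"
  "cascade_seen (cascade d g e x a) = visited e (cascade_p x) (g (cascade_q x) a)"
  by (simp_all add: cascade_def Let_def)

definition cascade_states :: "nat set \<Rightarrow> nat set \<Rightarrow> nat set" where
  "cascade_states Q P = (\<lambda>(q, p, S). cascade_state q p S) ` (Q \<times> P \<times> Pow P)"

lemma dstar_cascade:
  "cascade_q (dstar (cascade d g e) x u) = dstar d (cascade_q x) u"
  "cascade_p (dstar (cascade d g e) x u) = dstar e (cascade_p x) (gstar d g (cascade_q x) u)"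
  by (induction u arbitrary: x) simp_all

lemma dstar_cascade_det:
  assumes "u \<noteq> []" "cascade_q x = cascade_q y" "cascade_p x = cascade_p y"
  shows "dstar (cascade d g e) x u = dstar (cascade d g e) y u"
proof -
  obtain a u' where "u = a # u'"
    using assms(1) by (cases u) auto
  then show ?thesis
    using assms(2,3) by (simp add: cascade_def)
qed

lemma cascade_states_sel:
  "x \<in> cascade_states Q P \<Longrightarrow> cascade_q x \<in> Q \<and> cascade_p x \<in> P"
  by (auto simp: cascade_states_def)

lemma wf_cascade:
  assumes "wf_aut Q q0 d" "wf_aut P p0 e"
  shows "wf_aut (cascade_states Q P) (cascade_state q0 p0 {}) (cascade d g e)"
proof -
  have "cascade d g e x a \<in> cascade_states Q P" if "x \<in> cascade_states Q P" for x a
  proof -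
    let ?q = "cascade_q x" and ?p = "cascade_p x"
    have "?q \<in> Q" "?p \<in> P"
      using cascade_states_sel[OF that] by auto
    then have "(d ?q a, dstar e ?p (g ?q a), visited e ?p (g ?q a)) \<in> Q \<times> P \<times> Pow P"
      using assms by (auto simp: visited_def wf_aut_def dstar_closed)
    then show ?thesis
      unfolding cascade_def cascade_states_def Let_def by (rule rev_image_eqI) simp
  qed
  moreover have "cascade_state q0 p0 {} \<in> cascade_states Q P"
    using assms by (force simp: cascade_states_def wf_aut_def)
  moreover have "finite (cascade_states Q P)"
    using assms by (simp add: cascade_states_def wf_aut_def)
  ultimately show ?thesis
    by (simp add: wf_aut_def)
qed

lemma cascade_p_wpow_loop:
  assumes "dstar d (cascade_q y) u = cascade_q y"
  shows "cascade_p (dstar (cascade d g e) y (wpow u j))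
           = dstar e (cascade_p y) (wpow (gstar d g (cascade_q y) u) j)"
  by (simp add: dstar_cascade gstar_wpow_loop[OF assms])

lemma aperiodic_cascade:
  assumes "wf_aut Q q0 d" "wf_aut P p0 e" "aperiodic_aut Q d" "aperiodic_aut P e"
  shows "aperiodic_aut (cascade_states Q P) (cascade d g e)"
proof -
  obtain m1 where m1: "\<And>u q. q \<in> Q \<Longrightarrow> dstar d (dstar d q (wpow u m1)) u = dstar d q (wpow u m1)"
    using aperiodic_aut_loop[OF assms(3)] by blast
  obtain m2 where m2: "\<And>v p. p \<in> P \<Longrightarrow> dstar e (dstar e p (wpow v m2)) v = dstar e p (wpow v m2)"
    using aperiodic_aut_loop[OF assms(4)] by blast
  let ?D = "dstar (cascade d g e)"
  have "?D x (wpow u (Suc (m1 + m2))) = ?D x (wpow u (Suc (Suc (m1 + m2))))"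
    if x: "x \<in> cascade_states Q P" for u x
  proof (cases "u = []")
    case True
    then show ?thesis by (simp add: wpow_def)
  next
    case False
    define y where "y = ?D x (wpow u m1)"
    have y: "cascade_q y \<in> Q" "cascade_p y \<in> P"
      using cascade_states_sel[OF dstar_closed[OF wf_cascade[OF assms(1,2), of g] x]]
      by (simp_all add: y_def)
    have loop: "dstar d (cascade_q y) u = cascade_q y"
      using m1 cascade_states_sel[OF x] by (simp add: y_def dstar_cascade)
    have q_eq: "cascade_q (?D y (wpow u m2)) = cascade_q (?D y (wpow u (Suc m2)))"
      by (simp only: dstar_cascade dstar_wpow_loop[OF loop])
    have p_eq: "cascade_p (?D y (wpow u m2)) = cascade_p (?D y (wpow u (Suc m2)))"
      unfolding cascade_p_wpow_loop[OF loop] by (simp only: wpow_Suc' dstar_simps(3) m2[OF y(2)])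
    have "?D x (wpow u (Suc (m1 + m2))) = ?D (?D y (wpow u m2)) u"
      by (simp only: y_def wpow_Suc' wpow_simps(3) dstar_simps(3))
    also have "\<dots> = ?D (?D y (wpow u (Suc m2))) u"
      using dstar_cascade_det[OF False q_eq p_eq] .
    also have "\<dots> = ?D x (wpow u (Suc (Suc (m1 + m2))))"
      by (simp only: y_def wpow_Suc' wpow_simps(3) dstar_simps(3))
    finally show ?thesis .
  qed
  then show ?thesis
    unfolding aperiodic_aut_def wpow_def by blast
qed

lemma exists_block_index:
  fixes len :: "nat \<Rightarrow> nat"
  assumes "len 0 \<le> j" "\<forall>m. \<exists>n. m < len n"
  obtains n where "len n \<le> j" "j < len (Suc n)"
proof -
  obtain N where "j < len N"
    using assms(2) by blast
  then obtain n where "\<not> j < len n" "j < len (Suc n)"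
    using ex_least_nat_less[of "\<lambda>n. j < len n"] assms(1) by auto
  then show thesis
    by (metis that not_less)
qed

lemma INFM_in_blocks:
  fixes r :: "nat \<Rightarrow> 'a" and len :: "nat \<Rightarrow> nat"
  assumes mono: "mono len" and unbounded: "\<forall>m. \<exists>n. m < len n" and "\<exists>\<^sub>\<infinity>j. r j = p"
  shows "\<exists>\<^sub>\<infinity>n. p \<in> r ` {len n..<len (Suc n)}"
  unfolding INFM_nat
proof
  fix m
  obtain j where j: "len (Suc m) \<le> j" "r j = p"
    using assms(3) unfolding INFM_nat_le by blast
  moreover have "len 0 \<le> j"
    using j(1) mono by (meson le0 monoD order_trans)
  then obtain n where n: "len n \<le> j" "j < len (Suc n)"
    using exists_block_index unbounded by blast
  moreover have "m < n"
  proof (rule ccontr)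
    assume "\<not> m < n"
    then have "len (Suc n) \<le> len (Suc m)"
      using mono by (simp add: monoD)
    with j(1) n(2) show False by simp
  qed
  ultimately show "\<exists>n>m. p \<in> r ` {len n..<len (Suc n)}"
    by auto
qed

lemma infinitely_often_blocks:
  fixes r :: "nat \<Rightarrow> 'a" and R :: "nat \<Rightarrow> 'b" and len :: "nat \<Rightarrow> nat"
  assumes mono: "mono len" and unbounded: "\<forall>m. \<exists>n. m < len n" and finite: "finite (range R)"
    and blocks: "\<And>n. S (R (Suc n)) = r ` {len n..<len (Suc n)}"
  shows "{p. \<exists>\<^sub>\<infinity>j. r j = p} = (\<Union>x\<in>{x. \<exists>\<^sub>\<infinity>n. R n = x}. S x)"
proof (intro equalityI subsetI)
  fix p
  assume "p \<in> {p. \<exists>\<^sub>\<infinity>j. r j = p}"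
  then have "\<exists>\<^sub>\<infinity>n. p \<in> S (R (Suc n))"
    using INFM_in_blocks[OF mono unbounded, of r p] by (simp add: blocks)
  then have "\<exists>\<^sub>\<infinity>n. \<exists>x\<in>range R. R (Suc n) = x \<and> p \<in> S x"
    by (rule INFM_mono) auto
  then obtain x where x: "\<exists>\<^sub>\<infinity>n. R (Suc n) = x \<and> p \<in> S x"
    by (auto simp only: INFM_finite_Bex_distrib[OF finite])
  then have "\<exists>\<^sub>\<infinity>n. R n = x"
    unfolding INFM_nat by (metis less_SucI)
  moreover have "p \<in> S x"
    using x by (auto elim: INFM_E)
  ultimately show "p \<in> (\<Union>x\<in>{x. \<exists>\<^sub>\<infinity>n. R n = x}. S x)"
    by blast
next
  fix p
  assume "p \<in> (\<Union>x\<in>{x. \<exists>\<^sub>\<infinity>n. R n = x}. S x)"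
  then obtain x where x: "\<exists>\<^sub>\<infinity>n. R n = x" "p \<in> S x"
    by blast
  have "\<exists>j>m. r j = p" for m
  proof -
    obtain N where N: "m < len N"
      using unbounded by blast
    obtain n' where "N < n'" "R n' = x"
      using x(1) unfolding INFM_nat by blast
    then obtain n where n: "N \<le> n" "R (Suc n) = x"
      by (cases n') (auto simp: less_Suc_eq_le)
    then obtain j where "len n \<le> j" "r j = p"
      using x(2) blocks[of n] by auto
    moreover have "len N \<le> len n"
      using n(1) mono by (rule monoD[rotated])
    ultimately show ?thesis
      using N by (intro exI[of _ j]) auto
  qed
  then show "p \<in> {p. \<exists>\<^sub>\<infinity>j. r j = p}"
    unfolding INFM_nat by blast
qed

lemma trans_out_Suc:
  "trans_out q0 d g w (Suc n) = trans_out q0 d g w n @ g (run d q0 w n) (w n)"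
  by (simp add: trans_out_def)

lemma computes_nth:
  "computes q0 d g h \<Longrightarrow> j < length (trans_out q0 d g w n) \<Longrightarrow> h w j = trans_out q0 d g w n ! j"
  by (simp add: computes_def)

lemma computes_block:
  assumes "computes q0 d g h" "i < length (g (run d q0 w n) (w n))"
  shows "h w (length (trans_out q0 d g w n) + i) = g (run d q0 w n) (w n) ! i"
  using computes_nth[OF assms(1), of _ w "Suc n"] assms(2) by (simp add: trans_out_Suc nth_append)

lemma run_shift:
  assumes "\<forall>i<length v. z (s + i) = v ! i" "i \<le> length v"
  shows "run e p z (s + i) = dstar e (run e p z s) (take i v)"
  using assms(2)
proof (induction i)
  case (Suc i)
  then show ?case
    using assms(1) by (simp add: take_Suc_conv_app_nth)
qed simp

lemma visited_run:
  assumes "\<forall>i<length v. z (s + i) = v ! i"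
  shows "visited e (run e p z s) v = run e p z ` {s..<s + length v}"
proof -
  have "{s..<s + length v} = (+) s ` {..<length v}"
    by (simp add: lessThan_atLeast0 add.commute)
  then show ?thesis
    unfolding visited_def using run_shift[OF assms] by (simp add: image_image)
qed

lemma computes_block_run:
  fixes w :: "nat \<Rightarrow> 'x" and n :: nat
  assumes "computes q0 d g h"
  defines "v \<equiv> g (run d q0 w n) (w n)" and "s \<equiv> length (trans_out q0 d g w n)"
  shows "dstar e (run e p (h w) s) v = run e p (h w) (s + length v)"
    and "visited e (run e p (h w) s) v = run e p (h w) ` {s..<s + length v}"
  using run_shift[of v "h w" s "length v"] visited_run[of v "h w" s]
    computes_block[OF assms(1)] by (simp_all add: v_def s_def)

lemma run_cascade:
  assumes "computes q0 d g h"
  shows "cascade_q (run (cascade d g e) (cascade_state q0 p0 {}) w n) = run d q0 w n"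
    and "cascade_p (run (cascade d g e) (cascade_state q0 p0 {}) w n)
           = run e p0 (h w) (length (trans_out q0 d g w n))"
proof (induction n)
  case 0
  show "cascade_q (run (cascade d g e) (cascade_state q0 p0 {}) w 0) = run d q0 w 0"
    and "cascade_p (run (cascade d g e) (cascade_state q0 p0 {}) w 0)
           = run e p0 (h w) (length (trans_out q0 d g w 0))"
    by (simp_all add: trans_out_def)
next
  case (Suc n)
  then show "cascade_q (run (cascade d g e) (cascade_state q0 p0 {}) w (Suc n)) = run d q0 w (Suc n)"
    and "cascade_p (run (cascade d g e) (cascade_state q0 p0 {}) w (Suc n))
           = run e p0 (h w) (length (trans_out q0 d g w (Suc n)))"
    using computes_block_run(1)[OF assms(1), of e p0 w n]
    by (simp_all add: trans_out_Suc)
qed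

lemma run_cascade_seen:
  assumes "computes q0 d g h"
  shows "cascade_seen (run (cascade d g e) (cascade_state q0 p0 {}) w (Suc n))
           = run e p0 (h w) ` {length (trans_out q0 d g w n)..<length (trans_out q0 d g w (Suc n))}"
  using run_cascade[OF assms(1), of e p0 w n] computes_block_run(2)[OF assms(1), of e p0 w n]
  by (simp add: trans_out_Suc)

lemma vimage_muller_lang:
  assumes "computes q0 d g h" "wf_aut Q q0 d" "wf_aut P p0 e"
  shows "h -` muller_lang p0 e T
           = muller_lang (cascade_state q0 p0 {}) (cascade d g e) {X. \<Union>(cascade_seen ` X) \<in> T}"
proof -
  have "{p. \<exists>\<^sub>\<infinity>j. run e p0 (h w) j = p}
          = \<Union>(cascade_seen ` {x. \<exists>\<^sub>\<infinity>n. run (cascade d g e) (cascade_state q0 p0 {}) w n = x})"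
    for w
  proof (rule infinitely_often_blocks)
    show "mono (\<lambda>n. length (trans_out q0 d g w n))"
      by (simp add: mono_iff_le_Suc trans_out_Suc)
    show "\<forall>m. \<exists>n. m < length (trans_out q0 d g w n)"
      using assms(1) by (simp add: computes_def)
    have "range (run (cascade d g e) (cascade_state q0 p0 {}) w) \<subseteq> cascade_states Q P"
      using run_closed[OF wf_cascade[OF assms(2,3)]] by blast
    then show "finite (range (run (cascade d g e) (cascade_state q0 p0 {}) w))"
      using wf_cascade[OF assms(2,3)] finite_subset unfolding wf_aut_def by blast
  qed (rule run_cascade_seen[OF assms(1)])
  then show ?thesis
    unfolding muller_lang_def by simp
qed

lemma regular_omega_vimage:
  assumes "wf_aut Q q0 d" "computes q0 d g h" "regular_omega L"
  shows "regular_omega (h -` L)"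
proof -
  obtain P p0 e T where "wf_aut P p0 e" "L = muller_lang p0 e T"
    using assms(3) unfolding regular_omega_def by blast
  then show ?thesis
    unfolding regular_omega_def
    using wf_cascade[OF assms(1)] vimage_muller_lang[OF assms(2,1)] by metis
qed

lemma aperiodic_omega_vimage:
  assumes "wf_aut Q q0 d" "aperiodic_aut Q d" "computes q0 d g h" "aperiodic_omega L"
  shows "aperiodic_omega (h -` L)"
proof -
  obtain P p0 e T where "wf_aut P p0 e" "aperiodic_aut P e" "L = muller_lang p0 e T"
    using assms(4) unfolding aperiodic_omega_def by blast
  then show ?thesis
    unfolding aperiodic_omega_def
    using wf_cascade[OF assms(1)] aperiodic_cascade[OF assms(1) _ assms(2)]
      vimage_muller_lang[OF assms(3,1)] by metis
qed

lemma run_prefix: "\<forall>i<N. v i = w i \<Longrightarrow> n \<le> N \<Longrightarrow> run d q0 v n = run d q0 w n"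
  by (induction n) auto

lemma trans_out_prefix:
  assumes "\<forall>i<N. v i = w i"
  shows "trans_out q0 d g v N = trans_out q0 d g w N"
  unfolding trans_out_def using run_prefix[OF assms] assms
  by (intro arg_cong[where f = concat] map_cong) auto

lemma open_omega_vimage:
  assumes comp: "computes q0 d g h" and "open_omega L"
  shows "open_omega (h -` L)"
  unfolding open_omega_def
proof
  fix w
  assume "w \<in> h -` L"
  then obtain n where n: "\<And>v. \<forall>i<n. v i = h w i \<Longrightarrow> v \<in> L"
    using assms(2) unfolding open_omega_def by blast
  obtain N where N: "n < length (trans_out q0 d g w N)"
    using comp unfolding computes_def by blast
  have "h v \<in> L" if v: "\<forall>i<N. v i = w i" for v
  proof (rule n, intro allI impI)
    fix i
    assume "i < n"
    then have "i < length (trans_out q0 d g w N)"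
      using N by simp
    then show "h v i = h w i"
      using computes_nth[OF comp, of i v N] computes_nth[OF comp, of i w N]
      by (simp add: trans_out_prefix[OF v])
  qed
  then show "\<exists>N. \<forall>v. (\<forall>i<N. v i = w i) \<longrightarrow> v \<in> h -` L"
    by blast
qed

lemma closed_omega_vimage:
  "computes q0 d g h \<Longrightarrow> closed_omega L \<Longrightarrow> closed_omega (h -` L)"
  unfolding closed_omega_def vimage_Compl[symmetric] by (rule open_omega_vimage)

lemma sigma02_vimage:
  assumes "computes q0 d g h" "sigma02 L"
  shows "sigma02 (h -` L)"
proof -
  obtain C :: "nat \<Rightarrow> _" where C: "\<And>i. closed_omega (C i)" "L = (\<Union>i. C i)"
    using assms(2) unfolding sigma02_def by blast
  have "\<forall>i. closed_omega (h -` C i)"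
    using closed_omega_vimage[OF assms(1) C(1)] by blast
  moreover have "h -` L = (\<Union>i. h -` C i)"
    unfolding C(2) by (rule vimage_UN)
  ultimately show ?thesis
    unfolding sigma02_def by (intro exI[of _ "\<lambda>i. h -` C i"]) simp
qed

lemma Lclass_vimage:
  assumes "A \<in> Lclass L0 L1 k F c"
    and "\<And>X. X \<in> L0 \<Longrightarrow> h -` X \<in> L0" and "\<And>X. X \<in> L1 \<Longrightarrow> h -` X \<in> L1"
  shows "A \<circ> h \<in> Lclass L0 L1 k F c"
  using assms(1) unfolding Lclass_def Let_def mem_Collect_eq
  apply (elim conjE exE)
  subgoal for U B
    by (intro conjI exI[of _ "\<lambda>\<tau>. h -` U \<tau>"] exI[of _ "\<lambda>\<tau> \<sigma>. h -` B \<tau> \<sigma>"])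
      (auto simp: assms(2,3) set_eq_iff subset_iff)
  done

theorem proposition4p12:
  fixes k :: nat
    and F :: "nat list set"
    and c :: "nat list \<Rightarrow> nat list set \<times> (nat list \<Rightarrow> nat)"
  assumes "card (UNIV :: 'x set) \<ge> 2"
    and "k \<ge> 2"
    and "forest_Tk k F c"
  shows "(\<forall>(A :: (nat \<Rightarrow> 'x::finite) \<Rightarrow> nat) B.
            DA_reducible B A \<and> A \<in> RSigma_F k F c \<longrightarrow> B \<in> RSigma_F k F c)
       \<and> (\<forall>(A :: (nat \<Rightarrow> 'x) \<Rightarrow> nat) B.
            AA_reducible B A \<and> A \<in> ASigma_F k F c \<longrightarrow> B \<in> ASigma_F k F c)"
proof (intro conjI allI impI)
  fix A B :: "(nat \<Rightarrow> 'x) \<Rightarrow> nat"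
  assume "DA_reducible B A \<and> A \<in> RSigma_F k F c"
  then obtain h Q q0 d g where "B = A \<circ> h" "A \<in> RSigma_F k F c"
    and "wf_aut Q q0 d" "computes q0 d g h"
    unfolding DA_reducible_def DA_function_def by blast
  then show "B \<in> RSigma_F k F c"
    unfolding RSigma_F_def
    by (auto intro!: Lclass_vimage simp: regular_omega_vimage open_omega_vimage sigma02_vimage)
next
  fix A B :: "(nat \<Rightarrow> 'x) \<Rightarrow> nat"
  assume "AA_reducible B A \<and> A \<in> ASigma_F k F c"
  then obtain h Q q0 d g where "B = A \<circ> h" "A \<in> ASigma_F k F c"
    and "wf_aut Q q0 d" "aperiodic_aut Q d" "computes q0 d g h"
    unfolding AA_reducible_def AA_function_def by blast
  then show "B \<in> ASigma_F k F c"
    unfolding ASigma_F_def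
    by (auto intro!: Lclass_vimage simp: aperiodic_omega_vimage open_omega_vimage sigma02_vimage)
qed

end
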